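(* For every integer $\nu\ge1$ the following identity of polynomials in $z$ holds: $$\sum_{i=0}^{2\nu-2}(-1)^iz^i\binom{2\nu-2}{i}\sum_{r=0}^{\nu}\frac{(-1)^r(-\frac32)^{\overline r}\Gamma(2\nu+\frac12-r)}{r!\,(\nu-r)!\,\Gamma(r-\frac12)\Gamma(\nu-r+\frac12)}\cdot\frac{(\frac32-r)^{\overline i}}{(\frac52-r)^{\overline i}}=\sum_{i=0}^{\nu-2}(-1)^iz^i\binom{2\nu-2}{i}\frac{(\nu-i-1)^{\overline\nu}(\frac32)^{\overline i}}{(-\frac12-i)^{\overline\nu}\,\Gamma(-\frac12)\,(\frac52)^{\overline i}}.$$
   Context: $(x)^{\overline i}=x(x+1)\cdots(x+i-1)$, $(x)^{\overline0}=1$, is the rising factorial; $\Gamma$ is the Gamma function (so $\Gamma(-\frac12)=-2\sqrt\pi$). *)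

theory Defs
  imports "HOL-Analysis.Analysis"
begin

end

theory Submission
  imports Defs "HOL-Computational_Algebra.Polynomial"
begin

text \<open>The Gamma-function recurrences collapse the inner sum for the coefficient of \<open>z^i\<close> to a
  constant multiple of \<open>\<Sum>r\<le>\<nu>. (-1)^r (\<nu> choose r) q(r) / (a - r)\<close>, where \<open>a = i + 3/2\<close> and
  \<open>q(x) = pochhammer (\<nu> + 1/2 - x) \<nu>\<close> is a polynomial of degree \<open>\<nu>\<close>. Writing
  \<open>q(x) = q(a) + (x - a) h(x)\<close>, the \<open>\<nu>\<close>-th finite difference annihilates \<open>h\<close>, and the alternating
  sum of \<open>1 / (a - r)\<close> equals \<open>-\<nu>! / pochhammer (-a) (\<nu> + 1)\<close>. Hence the coefficient is
  proportional to \<open>q(a) = pochhammer (\<nu> - i - 1) \<nu>\<close>, which vanishes for \<open>\<nu> - 1 \<le> i \<le> 2\<nu> - 2\<close>;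
  this truncates the outer sum.\<close>

lemma alternating_binomial_sum_Suc:
  fixes f :: "nat \<Rightarrow> 'a::comm_ring_1"
  shows "(\<Sum>r\<le>Suc n. (-1)^r * of_nat (Suc n choose r) * f r)
       = (\<Sum>r\<le>n. (-1)^r * of_nat (n choose r) * (f r - f (Suc r)))"
proof -
  have "(\<Sum>r\<le>Suc n. (-1)^r * of_nat (Suc n choose r) * f r)
      = f 0 + (\<Sum>r\<le>n. (-1)^(Suc r) * of_nat (n choose Suc r) * f (Suc r))
            + (\<Sum>r\<le>n. (-1)^(Suc r) * of_nat (n choose r) * f (Suc r))"
    unfolding sum.atMost_Suc_shift add.assoc sum.distrib[symmetric]
    by (intro arg_cong2[where f = "(+)"] sum.cong) (auto simp: algebra_simps)
  also have "f 0 + (\<Sum>r\<le>n. (-1)^(Suc r) * of_nat (n choose Suc r) * f (Suc r))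
      = (\<Sum>r\<le>Suc n. (-1)^r * of_nat (n choose r) * f r)"
    by (subst sum.atMost_Suc_shift) simp
  also have "\<dots> = (\<Sum>r\<le>n. (-1)^r * of_nat (n choose r) * f r)"
    by (simp add: binomial_eq_0)
  finally show ?thesis
    by (simp add: right_diff_distrib sum_subtractf sum_negf)
qed

lemma degree_diff_pcompose_shift_less:
  fixes p :: "'a::idom poly"
  assumes "degree p > 0"
  shows "degree (p - pcompose p [:1, 1:]) < degree p"
proof -
  let ?q = "pcompose p [:1, 1:]"
  have "degree ?q = degree p"
    by (simp add: degree_pcompose)
  moreover have "lead_coeff ?q = lead_coeff p"
    by (simp add: lead_coeff_comp)
  ultimately have "degree (p - ?q) \<le> degree p" and "coeff (p - ?q) (degree p) = 0"
    using degree_diff_le[of p "degree p" ?q] by simp_all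
  with assms show ?thesis
    by (metis leading_coeff_0_iff degree_0 le_neq_implies_less)
qed

lemma alternating_binomial_sum_poly:
  fixes p :: "'a::idom poly"
  assumes "degree p < n"
  shows "(\<Sum>r\<le>n. (-1)^r * of_nat (n choose r) * poly p (of_nat r)) = 0"
  using assms
proof (induction n arbitrary: p)
  case 0
  then show ?case by simp
next
  case (Suc n)
  let ?q = "p - pcompose p [:1, 1:]"
  have "(\<Sum>r\<le>Suc n. (-1)^r * of_nat (Suc n choose r) * poly p (of_nat r))
      = (\<Sum>r\<le>n. (-1)^r * of_nat (n choose r) * poly ?q (of_nat r))"
    by (subst alternating_binomial_sum_Suc, intro sum.cong) (simp_all add: poly_pcompose algebra_simps)
  also have "\<dots> = 0"
  proof (cases "degree p = 0")
    case True
    then obtain c where "p = [:c:]" by (meson degree_eq_zeroE)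
    then show ?thesis by simp
  next
    case False
    then show ?thesis
      using degree_diff_pcompose_shift_less[of p] Suc.prems Suc.IH[of ?q] by simp
  qed
  finally show ?case .
qed

lemma alternating_binomial_sum_inverse:
  fixes a :: "'a::field_char_0"
  assumes "a \<notin> \<nat>"
  shows "(\<Sum>r\<le>n. (-1)^r * of_nat (n choose r) / (a - of_nat r))
       = - fact n / pochhammer (-a) (Suc n)"
  using assms
proof (induction n arbitrary: a)
  case 0
  then show ?case by simp
next
  case (Suc n)
  define R where "R = pochhammer (-a) (Suc (Suc n))"
  have "a - 1 \<notin> \<nat>"
    using Suc.prems by (metis Nats_1 Nats_add diff_add_cancel)
  have "R \<noteq> 0"
    using Suc.prems by (auto simp: R_def pochhammer_eq_0_iff)
  have "R = - a * pochhammer (1 - a) (Suc n)"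
    by (simp add: R_def pochhammer_rec)
  with \<open>R \<noteq> 0\<close> have inverse_left: "1 / pochhammer (1 - a) (Suc n) = - a / R"
    by simp
  have "R = (of_nat (Suc n) - a) * pochhammer (-a) (Suc n)"
    unfolding R_def by (subst pochhammer_rec') simp
  with \<open>R \<noteq> 0\<close> have inverse_right: "1 / pochhammer (-a) (Suc n) = (of_nat (Suc n) - a) / R"
    by simp
  have "(\<Sum>r\<le>Suc n. (-1)^r * of_nat (Suc n choose r) / (a - of_nat r))
      = (\<Sum>r\<le>n. (-1)^r * of_nat (n choose r) / (a - of_nat r))
        - (\<Sum>r\<le>n. (-1)^r * of_nat (n choose r) / ((a - 1) - of_nat r))"
    using alternating_binomial_sum_Suc[of n "\<lambda>r. 1 / (a - of_nat r)"]
    by (simp add: sum_subtractf algebra_simps)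
  also have "\<dots> = fact n * (- (1 / pochhammer (-a) (Suc n)) + 1 / pochhammer (1 - a) (Suc n))"
    using Suc.IH[OF Suc.prems] Suc.IH[OF \<open>a - 1 \<notin> \<nat>\<close>] by (simp add: algebra_simps)
  also have "\<dots> = - fact (Suc n) / R"
    unfolding inverse_left inverse_right using \<open>R \<noteq> 0\<close> by (simp add: field_simps)
  finally show ?case
    unfolding R_def .
qed

lemma alternating_binomial_sum_poly_div:
  fixes a :: "'a::field_char_0" and q :: "'a poly"
  assumes "a \<notin> \<nat>" and "degree q \<le> n"
  shows "(\<Sum>r\<le>n. (-1)^r * of_nat (n choose r) * poly q (of_nat r) / (a - of_nat r))
       = - poly q a * fact n / pochhammer (-a) (Suc n)"
proof -
  obtain h where h: "q - [:poly q a:] = [:-a, 1:] * h"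
    using poly_eq_0_iff_dvd[of "q - [:poly q a:]" a] by auto
  have h_sum: "(\<Sum>r\<le>n. (-1)^r * of_nat (n choose r) * poly h (of_nat r)) = 0"
  proof (cases "h = 0")
    case False
    have "Suc (degree h) = degree (q - [:poly q a:])"
      unfolding h using False by (subst degree_mult_eq) auto
    also have "\<dots> \<le> n"
      using assms(2) by (intro degree_diff_le) auto
    finally show ?thesis
      by (intro alternating_binomial_sum_poly) simp
  qed simp
  have quotient: "poly q (of_nat r) / (a - of_nat r) = poly q a / (a - of_nat r) - poly h (of_nat r)" for r
  proof -
    have "a - of_nat r \<noteq> 0"
      using assms(1) by auto
    moreover have "poly q (of_nat r) = poly q a + (of_nat r - a) * poly h (of_nat r)"
      using arg_cong[OF h, of "\<lambda>p. poly p (of_nat r)"] by (simp add: algebra_simps)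
    ultimately show ?thesis
      by (simp add: field_simps)
  qed
  have summand: "(-1)^r * of_nat (n choose r) * poly q (of_nat r) / (a - of_nat r)
      = poly q a * ((-1)^r * of_nat (n choose r) / (a - of_nat r))
        - (-1)^r * of_nat (n choose r) * poly h (of_nat r)" for r
    unfolding times_divide_eq_right[symmetric] quotient by (simp add: algebra_simps)
  then have "(\<Sum>r\<le>n. (-1)^r * of_nat (n choose r) * poly q (of_nat r) / (a - of_nat r))
      = poly q a * (\<Sum>r\<le>n. (-1)^r * of_nat (n choose r) / (a - of_nat r))
        - (\<Sum>r\<le>n. (-1)^r * of_nat (n choose r) * poly h (of_nat r))"
    by (simp add: summand sum_distrib_left sum_subtractf)
  then show ?thesis
    using alternating_binomial_sum_inverse[OF assms(1)] h_sum by simp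
qed

lemma half_odd_neq_of_int: "of_int m + 1/2 \<noteq> (of_int k :: 'a::field_char_0)"
proof
  assume "of_int m + 1/2 = (of_int k :: 'a)"
  then have "of_int (2 * m + 1) = (of_int (2 * k) :: 'a)"
    by (simp add: field_simps)
  then show False
    by (simp only: of_int_eq_iff) presburger
qed

lemma half_odd_notin_nonpos_Ints: "x = of_int m + 1/2 \<Longrightarrow> (x :: 'a::field_char_0) \<notin> \<int>\<^sub>\<le>\<^sub>0"
  using half_odd_neq_of_int by (metis nonpos_Ints_Int Ints_cases)

lemma pochhammer_half_odd_nonzero: "x = of_int m + 1/2 \<Longrightarrow> pochhammer (x :: 'a::field_char_0) n \<noteq> 0"
  using half_odd_notin_nonpos_Ints pochhammer_eq_0_imp_nonpos_Int by blast

lemma pochhammer_divide_pochhammer_Suc: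
  fixes x :: "'a::field"
  assumes "pochhammer (x + 1) i \<noteq> 0" and "x + of_nat i \<noteq> 0"
  shows "pochhammer x i / pochhammer (x + 1) i = x / (x + of_nat i)"
proof -
  have "x * pochhammer (x + 1) i = (x + of_nat i) * pochhammer x i"
    using pochhammer_rec[of x i] pochhammer_rec'[of x i] by simp
  then show ?thesis
    using assms by (simp add: field_simps)
qed

lemma inner_summand_partial_fraction:
  fixes \<nu> i r :: nat
  assumes "r \<le> \<nu>"
  shows "((-1)^r * pochhammer (-3/2) r * Gamma (2*real \<nu> + 1/2 - real r)) /
           (fact r * fact (\<nu>-r) * Gamma (real r - 1/2) * Gamma (real \<nu> - real r + 1/2)) *
           (pochhammer (3/2 - real r) i / pochhammer (5/2 - real r) i)
       = 3/2 / (Gamma (-1/2) * fact \<nu>) *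
         ((-1)^r * real (\<nu> choose r) * pochhammer (real \<nu> + 1/2 - real r) \<nu> / (real i + 3/2 - real r))"
proof -
  define G where "G = Gamma (-3/2 :: real)"
  define Gr where "Gr = Gamma (real r - 3/2)"
  define Gb where "Gb = Gamma (real \<nu> - real r + 1/2)"
  define P where "P = pochhammer (real \<nu> + 1/2 - real r) \<nu>"
  define c where "c = real r - 3/2"
  define d where "d = real i + 3/2 - real r"
  have "G \<noteq> 0"
    unfolding G_def by (rule Gamma_nonzero, rule half_odd_notin_nonpos_Ints[of _ "-2"]) simp
  have "Gr \<noteq> 0"
    unfolding Gr_def by (rule Gamma_nonzero, rule half_odd_notin_nonpos_Ints[of _ "int r - 2"]) simp
  have "Gb \<noteq> 0"
    unfolding Gb_def using assms
    by (intro Gamma_nonzero half_odd_notin_nonpos_Ints[of _ "int \<nu> - int r"]) simp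
  have "c \<noteq> 0" and "d \<noteq> 0"
    using half_odd_neq_of_int[of 1 "int r"] half_odd_neq_of_int[of "int i + 1" "int r"]
    by (simp_all add: c_def d_def algebra_simps)
  have rising: "pochhammer (-3/2) r = Gr / G"
    unfolding Gr_def G_def
    by (subst pochhammer_Gamma) (auto intro: half_odd_notin_nonpos_Ints[of _ "-2"] simp: algebra_simps)
  have Gamma_denominator: "Gamma (real r - 1/2) = c * Gr"
    using Gamma_plus1[OF half_odd_notin_nonpos_Ints[of "real r - 3/2" "int r - 2"]]
    by (simp add: Gr_def c_def algebra_simps)
  have Gamma_numerator: "Gamma (2*real \<nu> + 1/2 - real r) = P * Gb"
    using pochhammer_Gamma[OF half_odd_notin_nonpos_Ints[of "real \<nu> - real r + 1/2" "int \<nu> - int r"], of \<nu>]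
      \<open>Gb \<noteq> 0\<close> assms by (simp add: P_def Gb_def field_simps)
  have Gamma_minus_half: "Gamma (-1/2 :: real) = -3/2 * G"
    using Gamma_plus1[OF half_odd_notin_nonpos_Ints[of "-3/2 :: real" "-2"]] by (simp add: G_def)
  have ratio: "pochhammer (3/2 - real r) i / pochhammer (5/2 - real r) i = - c / d"
    using pochhammer_divide_pochhammer_Suc[of "3/2 - real r" i]
      pochhammer_half_odd_nonzero[of "5/2 - real r" "2 - int r" i] \<open>d \<noteq> 0\<close>
    by (simp add: c_def d_def algebra_simps)
  have binomial: "real (\<nu> choose r) = fact \<nu> / (fact r * fact (\<nu> - r))"
    by (rule binomial_fact[OF assms])
  show ?thesis
    unfolding rising Gamma_denominator Gamma_numerator Gamma_minus_half ratio binomial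
      P_def[symmetric] Gb_def[symmetric] d_def[symmetric]
    using \<open>G \<noteq> 0\<close> \<open>Gr \<noteq> 0\<close> \<open>Gb \<noteq> 0\<close> \<open>c \<noteq> 0\<close> \<open>d \<noteq> 0\<close>
    by (simp add: field_simps)
qed

lemma inner_sum_closed_form:
  fixes \<nu> i :: nat
  shows "(\<Sum>r=0..\<nu>. ((-1)^r * pochhammer (-3/2) r * Gamma (2*real \<nu> + 1/2 - real r)) /
           (fact r * fact (\<nu>-r) * Gamma (real r - 1/2) * Gamma (real \<nu> - real r + 1/2)) *
           (pochhammer (3/2 - real r) i / pochhammer (5/2 - real r) i))
       = pochhammer (real \<nu> - real i - 1) \<nu> * pochhammer (3/2) i /
           (pochhammer (-1/2 - real i) \<nu> * Gamma (-1/2) * pochhammer (5/2) i)"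
  (is "?inner = ?closed")
proof -
  define a where "a = real i + 3/2"
  define q where "q = (\<Prod>k<\<nu>. [:real \<nu> + 1/2 + real k, -1:])"
  have poly_q: "poly q x = pochhammer (real \<nu> + 1/2 - x) \<nu>" for x
    by (simp add: q_def poly_prod pochhammer_prod atLeast0LessThan algebra_simps)
  have "degree q \<le> \<nu>"
    unfolding q_def using degree_prod_sum_le[of "{..<\<nu>}" "\<lambda>k. [:real \<nu> + 1/2 + real k, -1:]"]
    by simp
  have "a \<notin> \<nat>"
  proof
    assume "a \<in> \<nat>"
    then obtain n where "a = of_int (int n)"
      by (auto elim!: Nats_cases)
    then show False
      using half_odd_neq_of_int[of "int i + 1" "int n", where 'a = real] by (simp add: a_def)
  qed
  have "pochhammer (5/2 :: real) i \<noteq> 0"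
    by (rule pochhammer_half_odd_nonzero[of _ 2]) simp
  have "pochhammer (-1/2 - real i) \<nu> \<noteq> 0"
    by (rule pochhammer_half_odd_nonzero[of _ "- int i - 1"]) simp
  have "Gamma (-1/2 :: real) \<noteq> 0"
    by (rule Gamma_nonzero, rule half_odd_notin_nonpos_Ints[of _ "-1"]) simp
  have "a \<noteq> 0"
    by (simp add: a_def add_nonneg_pos)
  have q_at_a: "poly q a = pochhammer (real \<nu> - real i - 1) \<nu>"
    by (simp add: poly_q a_def algebra_simps)
  have rising_a: "pochhammer (-a) (Suc \<nu>) = - a * pochhammer (-1/2 - real i) \<nu>"
    by (simp add: pochhammer_rec a_def)
  have "pochhammer (3/2) i / pochhammer (5/2) i = 3/2 / a"
    using pochhammer_divide_pochhammer_Suc[of "3/2 :: real" i] \<open>pochhammer (5/2) i \<noteq> 0\<close>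
    by (simp add: a_def algebra_simps)
  then have rising_3_2: "pochhammer (3/2) i = 3/2 / a * pochhammer (5/2) i"
    using \<open>pochhammer (5/2) i \<noteq> 0\<close> by (simp add: field_simps)
  have "?inner = 3/2 / (Gamma (-1/2) * fact \<nu>) *
      (\<Sum>r\<le>\<nu>. (-1)^r * real (\<nu> choose r) * poly q (real r) / (a - real r))"
    unfolding atLeast0AtMost sum_distrib_left
    by (intro sum.cong refl, subst inner_summand_partial_fraction) (auto simp: poly_q a_def)
  also have "\<dots> = 3/2 / (Gamma (-1/2) * fact \<nu>) * (- poly q a * fact \<nu> / pochhammer (-a) (Suc \<nu>))"
    using alternating_binomial_sum_poly_div[OF \<open>a \<notin> \<nat>\<close> \<open>degree q \<le> \<nu>\<close>] by simp
  also have "\<dots> = ?closed"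
    unfolding q_at_a rising_a rising_3_2
    using \<open>pochhammer (5/2) i \<noteq> 0\<close> \<open>pochhammer (-1/2 - real i) \<nu> \<noteq> 0\<close>
      \<open>Gamma (-1/2) \<noteq> 0\<close> \<open>a \<noteq> 0\<close>
    by (simp add: field_simps)
  finally show ?thesis .
qed

theorem mainTheorem14:
  fixes \<nu> :: nat and z :: real
  assumes "\<nu> \<ge> 1"
  shows "(\<Sum>i=0..2*\<nu>-2. (-1)^i * z^i * real ((2*\<nu>-2) choose i) *
           (\<Sum>r=0..\<nu>. ((-1)^r * pochhammer (-3/2) r * Gamma (2*real \<nu> + 1/2 - real r)) /
              (fact r * fact (\<nu>-r) * Gamma (real r - 1/2) * Gamma (real \<nu> - real r + 1/2)) *
              (pochhammer (3/2 - real r) i / pochhammer (5/2 - real r) i)))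
       = (\<Sum>i<\<nu>-1. (-1)^i * z^i * real ((2*\<nu>-2) choose i) *
           (pochhammer (real \<nu> - real i - 1) \<nu> * pochhammer (3/2) i) /
           (pochhammer (-1/2 - real i) \<nu> * Gamma (-1/2) * pochhammer (5/2) i))"
  (is "?lhs = (\<Sum>i<\<nu>-1. ?term i)")
proof -
  have vanishing: "?term i = 0" if "i \<in> {0..2*\<nu>-2} - {..<\<nu>-1}" for i
  proof -
    have "real \<nu> - real i - 1 = - of_nat (i + 1 - \<nu>)" and "i + 1 - \<nu> < \<nu>"
      using that assms by auto
    then have "pochhammer (real \<nu> - real i - 1) \<nu> = 0"
      by (metis pochhammer_of_nat_eq_0_lemma)
    then show ?thesis
      by simp
  qed
  have "?lhs = (\<Sum>i=0..2*\<nu>-2. ?term i)"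
    by (intro sum.cong refl, subst inner_sum_closed_form) simp
  also have "\<dots> = (\<Sum>i<\<nu>-1. ?term i)"
    by (rule sum.mono_neutral_right) (use vanishing in auto)
  finally show ?thesis .
qed

end
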